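(* Let $n\ge 1$ and $\mathcal{P}=\{x\in\mathbb{R}^n : \tfrac12(\max_i x_i-\min_i x_i)\le 1\}$. The number of faces of $\mathcal{P}$ (including $\mathcal{P}$ itself) is $3^n-2^{n+1}+2$.
   Context: A face of a polyhedron $\mathcal{Q}\subseteq\mathbb{R}^n$ is a non-empty subset $F$ with either $F=\mathcal{Q}$ or $F=\mathcal{Q}\cap\{x: b^\top x=c\}$ for some $b\in\mathbb{R}^n$, $c\in\mathbb{R}$ with $b^\top x\le c$ for all $x\in\mathcal{Q}$. *)

theory Defs
  imports "HOL-Analysis.Analysis"
begin

definition poly_face :: "'a::real_inner set \<Rightarrow> 'a set \<Rightarrow> bool" where
  "poly_face Q F \<longleftrightarrow> F \<noteq> {} \<and>
     (F = Q \<or> (\<exists>b c. (\<forall>x\<in>Q. b \<bullet> x \<le> c) \<and> F = Q \<inter> {x. b \<bullet> x = c}))"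

definition range_poly :: "(real^'n) set" where
  "range_poly = {x. (Max (range (\<lambda>i. x $ i)) - Min (range (\<lambda>i. x $ i))) / 2 \<le> 1}"

end

theory Submission
  imports Defs
begin

text \<open>
  A point lies in P iff its coordinates fit in a window [m, m + 2]. A linear functional b is bounded
  above on P only if its coordinates sum to 0 (P contains the diagonal line), and then its maximum is
  attained exactly where the coordinates with b_k > 0 sit at the top of the window and those with
  b_k < 0 at the bottom. Hence the proper faces are indexed by the pairs (S, T) of disjoint nonempty
  coordinate sets, each such pair giving a different face. Pairs of disjoint sets correspond to maps
  into a three-element set, so there are 3^n - 2^(n+1) + 1 such pairs; adding P itself gives the count.
\<close>

lemma range_poly_iff:
  "x \<in> (range_poly :: (real^'n) set) \<longleftrightarrow> (\<exists>m. \<forall>k. m \<le> x$k \<and> x$k \<le> m + 2)"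
proof -
  let ?R = "range (\<lambda>i. x $ i)"
  have fin: "finite ?R" and ne: "?R \<noteq> {}" by simp_all
  show ?thesis
  proof
    assume "x \<in> range_poly"
    hence width: "Max ?R - Min ?R \<le> 2" unfolding range_poly_def by simp
    have "Min ?R \<le> x$k \<and> x$k \<le> Min ?R + 2" for k
    proof -
      have "Min ?R \<le> x$k" "x$k \<le> Max ?R" using fin by auto
      thus ?thesis using width by linarith
    qed
    thus "\<exists>m. \<forall>k. m \<le> x$k \<and> x$k \<le> m + 2" by blast
  next
    assume "\<exists>m. \<forall>k. m \<le> x$k \<and> x$k \<le> m + 2"
    then obtain m where m: "\<forall>k. m \<le> x$k \<and> x$k \<le> m + 2" by blast
    have "Max ?R \<le> m + 2" "m \<le> Min ?R" using fin ne m by (auto simp: Max_le_iff Min_ge_iff)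
    hence "Max ?R - Min ?R \<le> 2" by linarith
    thus "x \<in> range_poly" unfolding range_poly_def by simp
  qed
qed

lemma const_vec_in_range_poly: "(\<chi> k. t) \<in> (range_poly :: (real^'n) set)"
  unfolding range_poly_iff by (intro exI[of _ t]) auto

definition range_face :: "'n set \<Rightarrow> 'n set \<Rightarrow> (real^'n) set" where
  "range_face S T = {x. \<exists>m. (\<forall>k. m \<le> x$k \<and> x$k \<le> m + 2) \<and>
                          (\<forall>i\<in>S. x$i = m + 2) \<and> (\<forall>j\<in>T. x$j = m)}"

lemma indicator_vec_in_range_face:
  assumes "S \<inter> T = {}"
  shows "((\<chi> k. if k \<in> S then 2 else 0) :: real^'n) \<in> range_face S T"
  using assms unfolding range_face_def by (intro CollectI exI[of _ 0]) auto

lemma range_poly_ne_range_face: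
  assumes "S \<noteq> {}" "T \<noteq> {}"
  shows "(range_poly :: (real^'n) set) \<noteq> range_face S T"
proof
  assume "range_poly = range_face S T"
  hence "(\<chi> k. 0) \<in> range_face S T" using const_vec_in_range_poly by blast
  then obtain m where "\<forall>i\<in>S. (0::real) = m + 2" "\<forall>j\<in>T. (0::real) = m"
    unfolding range_face_def by auto
  thus False using assms by force
qed

text \<open>The witnesses take only the values 0 and 2 and lie in range_face S T; in range_face S' T'
  the coordinates in S' exceed those in T' by 2, which pins S' inside S resp. T' inside T.\<close>
lemma range_face_subset_imp:
  fixes S T S' T' :: "'n::finite set"
  assumes sub: "range_face S T \<subseteq> range_face S' T'" and "S \<inter> T = {}"
    and "S' \<noteq> {}" "T' \<noteq> {}"
  shows "S' \<subseteq> S \<and> T' \<subseteq> T"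
proof -
  obtain i0 j0 where "i0 \<in> S'" "j0 \<in> T'" using assms(3,4) by blast
  define x :: "real^'n" where "x = (\<chi> k. if k \<in> S then 2 else 0)"
  define y :: "real^'n" where "y = (\<chi> k. if k \<in> T then 0 else 2)"
  have "x \<in> range_face S T" "y \<in> range_face S T"
    using \<open>S \<inter> T = {}\<close> unfolding x_def y_def range_face_def by (auto intro!: exI[of _ 0])
  hence "x \<in> range_face S' T'" "y \<in> range_face S' T'" using sub by blast+
  then obtain m m' where x: "\<forall>i\<in>S'. x$i = m + 2" "\<forall>j\<in>T'. x$j = m"
      and y: "\<forall>i\<in>S'. y$i = m' + 2" "\<forall>j\<in>T'. y$j = m'"
    unfolding range_face_def by blast
  have "i \<in> S" if "i \<in> S'" for i
  proof -
    have "x$i = x$j0 + 2" using x that \<open>j0 \<in> T'\<close> by simp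
    thus ?thesis unfolding x_def by (simp split: if_splits)
  qed
  moreover have "j \<in> T" if "j \<in> T'" for j
  proof -
    have "y$j = y$i0 - 2" using y that \<open>i0 \<in> S'\<close> by simp
    thus ?thesis unfolding y_def by (simp split: if_splits)
  qed
  ultimately show ?thesis by blast
qed

lemma inj_on_range_face:
  "inj_on (\<lambda>(S, T). range_face S T) {(S, T). S \<inter> T = ({}::'n::finite set) \<and> S \<noteq> {} \<and> T \<noteq> {}}"
proof (rule inj_onI, clarsimp)
  fix S T S' T' :: "'n set"
  assume "range_face S T = range_face S' T'" "S \<inter> T = {}" "S' \<inter> T' = {}"
    "S \<noteq> {}" "T \<noteq> {}" "S' \<noteq> {}" "T' \<noteq> {}"
  thus "S = S' \<and> T = T'" using range_face_subset_imp by (metis order.refl subset_antisym)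
qed

definition support_range_poly :: "real^'n \<Rightarrow> real" where
  "support_range_poly b = (\<Sum>k\<in>UNIV. if b$k > 0 then 2 * b$k else 0)"

lemma sum_eq_0_if_bounded_on_range_poly:
  fixes b :: "real^'n"
  assumes "\<forall>x\<in>range_poly. b \<bullet> x \<le> c"
  shows "(\<Sum>k\<in>UNIV. b$k) = 0"
proof (rule ccontr)
  assume nz: "(\<Sum>k\<in>UNIV. b$k) \<noteq> 0"
  define t where "t = (c + 1) / (\<Sum>k\<in>UNIV. b$k)"
  have "b \<bullet> (\<chi> k. t) = t * (\<Sum>k\<in>UNIV. b$k)"
    by (simp add: inner_vec_def sum_distrib_left mult.commute)
  also have "\<dots> = c + 1" unfolding t_def using nz by simp
  finally show False using assms const_vec_in_range_poly[of t] by fastforce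
qed

text \<open>With the coordinates of b summing to 0, b \<bullet> x = \<Sum>k. b_k (x_k - m), and each summand is
  at most 2 max(b_k, 0), with equality iff x_k is at the appropriate end of the window.\<close>
lemma inner_le_support_range_poly:
  fixes b x :: "real^'n"
  assumes sum_b: "(\<Sum>k\<in>UNIV. b$k) = 0" and window: "\<forall>k. m \<le> x$k \<and> x$k \<le> m + 2"
  shows "b \<bullet> x \<le> support_range_poly b"
    and "b \<bullet> x = support_range_poly b \<longleftrightarrow>
           (\<forall>k. b$k > 0 \<longrightarrow> x$k = m + 2) \<and> (\<forall>k. b$k < 0 \<longrightarrow> x$k = m)"
proof -
  define t where "t k = (if b$k > 0 then 2 * b$k else 0) - b$k * (x$k - m)" for k
  have "(\<Sum>k\<in>UNIV. b$k * (x$k - m)) = b \<bullet> x - m * (\<Sum>k\<in>UNIV. b$k)"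
    by (simp add: inner_vec_def algebra_simps sum_subtractf sum_distrib_left)
  hence "b \<bullet> x = (\<Sum>k\<in>UNIV. b$k * (x$k - m))" using sum_b by simp
  hence gap: "support_range_poly b - b \<bullet> x = (\<Sum>k\<in>UNIV. t k)"
    unfolding t_def support_range_poly_def sum_subtractf by simp
  have t_iff: "t k \<ge> 0 \<and> (t k = 0 \<longleftrightarrow> (b$k > 0 \<longrightarrow> x$k = m + 2) \<and> (b$k < 0 \<longrightarrow> x$k = m))" for k
  proof (cases "b$k > 0")
    case True
    hence "t k = b$k * (m + 2 - x$k)" unfolding t_def by (simp add: algebra_simps)
    thus ?thesis using True window by auto
  next
    case False
    hence "t k = - b$k * (x$k - m)" unfolding t_def by simp
    thus ?thesis using False window by (auto simp: mult_nonpos_nonneg)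
  qed
  have t_nonneg: "t k \<ge> 0" for k using t_iff by blast
  have "(\<Sum>k\<in>UNIV. t k) \<ge> 0" by (rule sum_nonneg) (rule t_nonneg)
  thus "b \<bullet> x \<le> support_range_poly b" using gap by linarith
  have "b \<bullet> x = support_range_poly b \<longleftrightarrow> (\<forall>k. t k = 0)"
    using gap sum_nonneg_eq_0_iff[of UNIV t] t_nonneg by auto
  thus "b \<bullet> x = support_range_poly b \<longleftrightarrow>
          (\<forall>k. b$k > 0 \<longrightarrow> x$k = m + 2) \<and> (\<forall>k. b$k < 0 \<longrightarrow> x$k = m)"
    using t_iff by blast
qed

lemma inner_le_support_range_poly_on:
  fixes b :: "real^'n"
  assumes "(\<Sum>k\<in>UNIV. b$k) = 0" "x \<in> range_poly"
  shows "b \<bullet> x \<le> support_range_poly b"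
proof -
  obtain m where "\<forall>k. m \<le> x$k \<and> x$k \<le> m + 2" using assms(2) range_poly_iff by blast
  thus ?thesis by (rule inner_le_support_range_poly(1)[OF assms(1)])
qed

lemma range_poly_inter_support_hyperplane:
  fixes b :: "real^'n"
  assumes "(\<Sum>k\<in>UNIV. b$k) = 0"
  shows "range_poly \<inter> {x. b \<bullet> x = support_range_poly b} = range_face {k. b$k > 0} {k. b$k < 0}"
proof -
  have "x \<in> range_poly \<and> b \<bullet> x = support_range_poly b \<longleftrightarrow> x \<in> range_face {k. b$k > 0} {k. b$k < 0}"
    for x
    using inner_le_support_range_poly(2)[OF assms, of _ x]
    unfolding range_poly_iff range_face_def by auto
  thus ?thesis by blast
qed

lemma ex_not_nonneg_if_sum_eq_0:
  fixes f :: "'a \<Rightarrow> 'b::ordered_comm_monoid_add"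
  assumes "finite A" "sum f A = 0" "a \<in> A" "f a \<noteq> 0"
  shows "\<exists>j\<in>A. \<not> f j \<ge> 0"
proof (rule ccontr)
  assume "\<not> (\<exists>j\<in>A. \<not> f j \<ge> 0)"
  hence "\<forall>i\<in>A. f i = 0" using sum_nonneg_eq_0_iff[OF assms(1)] assms(2) by blast
  thus False using assms(3,4) by blast
qed

lemma pos_and_neg_if_sum_eq_0:
  fixes f :: "'a \<Rightarrow> 'b::linordered_ab_group_add"
  assumes "finite A" "sum f A = 0" "a \<in> A" "f a \<noteq> 0"
  shows "\<exists>i\<in>A. f i > 0" and "\<exists>j\<in>A. f j < 0"
  using ex_not_nonneg_if_sum_eq_0[of A f a] ex_not_nonneg_if_sum_eq_0[of A "\<lambda>i. - f i" a] assms
  by (auto simp: sum_negf not_le)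

lemma poly_face_range_face:
  assumes disj: "S \<inter> T = {}" and ne: "S \<noteq> {}" "T \<noteq> {}"
  shows "poly_face (range_poly :: (real^'n) set) (range_face S T)"
proof -
  \<comment> \<open>weights |T| on S and -|S| on T, so that the coordinates sum to 0\<close>
  define b :: "real^'n" where
    "b = (\<chi> k. (if k \<in> S then real (card T) else 0) - (if k \<in> T then real (card S) else 0))"
  have "card S > 0" "card T > 0" using ne by (auto simp: card_gt_0_iff)
  hence signs: "{k. b$k > 0} = S" "{k. b$k < 0} = T" unfolding b_def using disj by auto
  have sum_b: "(\<Sum>k\<in>UNIV. b$k) = 0" unfolding b_def by (simp add: sum_subtractf sum.If_cases)
  have "range_face S T \<noteq> {}" using indicator_vec_in_range_face[OF disj] by blast
  moreover have "range_face S T = range_poly \<inter> {x. b \<bullet> x = support_range_poly b}"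
    using range_poly_inter_support_hyperplane[OF sum_b] unfolding signs ..
  ultimately show ?thesis
    unfolding poly_face_def using inner_le_support_range_poly_on[OF sum_b] by blast
qed

lemma poly_face_range_poly_cases:
  assumes "poly_face (range_poly :: (real^'n) set) F" "F \<noteq> range_poly"
  obtains S T where "S \<inter> T = {}" "S \<noteq> {}" "T \<noteq> {}" "F = range_face S T"
proof -
  obtain b c where bounded: "\<forall>x\<in>range_poly. b \<bullet> x \<le> c"
      and F: "F = range_poly \<inter> {x. b \<bullet> x = c}" and "F \<noteq> {}"
    using assms unfolding poly_face_def by blast
  then obtain y where y: "y \<in> range_poly" "b \<bullet> y = c" by blast
  have sum_b: "(\<Sum>k\<in>UNIV. b$k) = 0" by (rule sum_eq_0_if_bounded_on_range_poly[OF bounded])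
  obtain k0 where "b$k0 \<noteq> 0"
  proof (cases "b = 0")
    case True
    hence "F = range_poly" using F y by auto
    thus ?thesis using assms(2) by blast
  qed (metis vec_eq_iff zero_index)
  define S T where "S = {k. b$k > 0}" and "T = {k. b$k < 0}"
  have "S \<noteq> {}" "T \<noteq> {}"
    using pos_and_neg_if_sum_eq_0[of UNIV "\<lambda>k. b$k"] sum_b \<open>b$k0 \<noteq> 0\<close>
    unfolding S_def T_def by auto
  have "S \<inter> T = {}" unfolding S_def T_def by auto
  have face: "range_poly \<inter> {x. b \<bullet> x = support_range_poly b} = range_face S T"
    unfolding S_def T_def by (rule range_poly_inter_support_hyperplane[OF sum_b])
  obtain x where "x \<in> range_poly" "b \<bullet> x = support_range_poly b"
    using indicator_vec_in_range_face[OF \<open>S \<inter> T = {}\<close>] face by blast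
  hence "support_range_poly b \<le> c" using bounded by metis
  moreover have "c \<le> support_range_poly b"
    using y inner_le_support_range_poly_on[OF sum_b] by metis
  ultimately have "F = range_face S T" using F face by simp
  thus thesis using that \<open>S \<inter> T = {}\<close> \<open>S \<noteq> {}\<close> \<open>T \<noteq> {}\<close> by blast
qed

lemma faces_range_poly:
  "{F. poly_face (range_poly :: (real^'n) set) F} =
     insert range_poly ((\<lambda>(S, T). range_face S T) ` {(S, T). S \<inter> T = {} \<and> S \<noteq> {} \<and> T \<noteq> {}})"
proof (intro set_eqI iffI)
  fix F :: "(real^'n) set" assume "F \<in> {F. poly_face (range_poly :: (real^'n) set) F}"
  hence face: "poly_face range_poly F" by simp
  show "F \<in> insert range_poly ((\<lambda>(S, T). range_face S T) ` {(S, T). S \<inter> T = {} \<and> S \<noteq> {} \<and> T \<noteq> {}})"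
  proof (cases "F = range_poly")
    case False
    then obtain S T where "S \<inter> T = {}" "S \<noteq> {}" "T \<noteq> {}" "F = range_face S T"
      using poly_face_range_poly_cases[OF face] by blast
    thus ?thesis by (intro insertI2 image_eqI[of _ _ "(S, T)"]) simp_all
  qed simp
next
  fix F :: "(real^'n) set"
  assume "F \<in> insert range_poly ((\<lambda>(S, T). range_face S T) ` {(S, T). S \<inter> T = {} \<and> S \<noteq> {} \<and> T \<noteq> {}})"
  then consider "F = range_poly"
    | S T where "S \<inter> T = {}" "S \<noteq> {}" "T \<noteq> {}" "F = range_face S T"
    by blast
  thus "F \<in> {F. poly_face (range_poly :: (real^'n) set) F}"
  proof cases
    case 1
    thus ?thesis unfolding poly_face_def using const_vec_in_range_poly by blast
  next
    case 2
    thus ?thesis using poly_face_range_face by simp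
  qed
qed

lemma card_disjoint_pairs: "card {(S, T). S \<inter> T = ({}::'n::finite set)} = 3 ^ CARD('n)"
proof -
  let ?A = "PiE (UNIV :: 'n set) (\<lambda>_. {0, 1, 2::nat})"
  let ?h = "\<lambda>f. ({i. f i = 0}, {i. f i = (1::nat)})"
  have "card ?A = card {0, 1, 2::nat} ^ CARD('n)" by (rule card_funcsetE) simp
  also have "card {0, 1, 2::nat} = 3" by simp
  finally have card_A: "card ?A = 3 ^ CARD('n)" .
  have inj: "inj_on ?h ?A"
  proof (rule inj_onI)
    fix f g assume f: "f \<in> ?A" and g: "g \<in> ?A" and eq: "?h f = ?h g"
    show "f = g"
    proof
      fix i
      have "f i \<in> {0, 1, 2}" "g i \<in> {0, 1, 2}" using f g by (auto simp: PiE_iff)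
      moreover have "f i = 0 \<longleftrightarrow> g i = 0" "f i = 1 \<longleftrightarrow> g i = 1" using eq by (auto simp: set_eq_iff)
      ultimately show "f i = g i" by auto
    qed
  qed
  have image: "?h ` ?A = {(S, T). S \<inter> T = {}}"
  proof (intro set_eqI iffI)
    fix p assume "p \<in> {(S, T). S \<inter> T = ({}::'n set)}"
    then obtain S T where p: "p = (S, T)" and disj: "S \<inter> T = {}" by blast
    define f where "f i = (if i \<in> S then 0 else if i \<in> T then 1 else (2::nat))" for i
    have "f \<in> ?A" unfolding f_def by (auto simp: PiE_iff)
    moreover have "p = ?h f" unfolding f_def p using disj by auto
    ultimately show "p \<in> ?h ` ?A" by blast
  qed auto
  show ?thesis using card_image[OF inj] card_A unfolding image by simp
qed

text \<open>The pairs with S = {} or T = {} are 2 \<cdot> 2^n pairs counted with ({}, {}) twice.\<close>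
lemma card_disjoint_nonempty_pairs:
  "int (card {(S, T). S \<inter> T = ({}::'n::finite set) \<and> S \<noteq> {} \<and> T \<noteq> {}})
     = 3 ^ CARD('n) - 2 ^ (CARD('n) + 1) + 1"
proof -
  let ?D = "{(S, T). S \<inter> T = ({}::'n set) \<and> S \<noteq> {} \<and> T \<noteq> {}}"
  let ?A = "{{}} \<times> (UNIV :: 'n set set)" and ?B = "(UNIV :: 'n set set) \<times> {{}}"
  have split: "{(S, T). S \<inter> T = ({}::'n set)} = ?D \<union> (?A \<union> ?B)" by auto
  have "card {(S, T). S \<inter> T = ({}::'n set)} = card ?D + card (?A \<union> ?B)"
    unfolding split by (rule card_Un_disjoint) auto
  moreover have "card ?A + card ?B = card (?A \<union> ?B) + card (?A \<inter> ?B)"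
    using card_Un_Int[of ?A ?B] by simp
  moreover have "?A \<inter> ?B = {({}, {})}" by auto
  moreover have "card ?A = 2 ^ CARD('n)" "card ?B = 2 ^ CARD('n)"
    by (simp_all add: card_cartesian_product card_UNIV_set)
  ultimately have "card ?D + 2 * 2 ^ CARD('n) = 3 ^ CARD('n) + 1"
    using card_disjoint_pairs[where 'n='n] by simp
  hence "int (card ?D + 2 * 2 ^ CARD('n)) = int (3 ^ CARD('n) + 1)" by (rule arg_cong)
  thus ?thesis by (simp add: power_add algebra_simps)
qed

theorem corollary1:
  shows "finite {F. poly_face (range_poly :: (real^'n) set) F} \<and>
         int (card {F. poly_face (range_poly :: (real^'n) set) F})
           = 3 ^ CARD('n) - 2 ^ (CARD('n) + 1) + 2"
proof -
  let ?D = "{(S, T). S \<inter> T = ({}::'n set) \<and> S \<noteq> {} \<and> T \<noteq> {}}"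
  let ?proper = "(\<lambda>(S, T). range_face S T) ` ?D"
  have "range_poly \<notin> ?proper"
  proof
    assume "range_poly \<in> ?proper"
    then obtain p where "p \<in> ?D" "range_poly = (\<lambda>(S, T). range_face S T) p" by (rule imageE)
    thus False using range_poly_ne_range_face by (cases p) auto
  qed
  moreover have "finite ?proper" by simp
  ultimately have "card (insert range_poly ?proper) = card ?D + 1"
    using card_image[OF inj_on_range_face] by simp
  thus ?thesis
    unfolding faces_range_poly using card_disjoint_nonempty_pairs[where 'n='n] by simp
qed

end
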